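(* Let $\beta>0$, $h\ge0$ and $\xi$ a model. On $\Pr([0,1])$ with the weak-$*$ topology, the functional $\mathcal{P}_{\beta,h,\xi}$ is lower semi-continuous, while $\tilde{\mathcal{P}}_{\beta,h,\xi}$ is not lower semi-continuous.
   Context: A model is $\xi(t)=\sum_{p\ge2}\beta_p^2t^p$, real $\beta_p$ not all zero, with $\xi(1+\epsilon)<\infty$ for some $\epsilon>0$. For $\mu\in\Pr([0,1])$ let $\hat\mu(t)=\int_t^1\mu[0,s]ds$ and $q_*=\sup\operatorname{supp}\mu$. Define $\mathcal{P}_{\beta,h,\xi}(\mu)=\frac12\big(\int_0^1\beta^2\xi''(s)\hat\mu(s)ds+\int_0^1(\frac1{\hat\mu(s)}-\frac1{1-s})ds+h^2\hat\mu(0)\big)$, and $\tilde{\mathcal{P}}_{\beta,h,\xi}(\mu)=\frac12\big(\int_0^1\beta^2\xi'(s)\mu[0,s]ds+h^2\hat\mu(0)+\int_0^{q_*}\frac{ds}{\hat\mu(s)}+\log(1-q_* )\big)$ if $q_*<1$, and $+\infty$ if $q_*=1$. *)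

theory Defs
  imports "HOL-Probability.Probability"
begin

text \<open>A model: xi(t) = sum_{p>=2} c_p^2 t^p with real c_p, not all zero, and
  xi(1+eps) finite for some eps > 0. Coefficients are indexed by nat; c 0 = c 1 = 0.\<close>

definition is_model :: "(nat \<Rightarrow> real) \<Rightarrow> bool" where
  "is_model c \<longleftrightarrow> c 0 = 0 \<and> c 1 = 0 \<and> (\<exists>p. c p \<noteq> 0) \<and>
     (\<exists>eps>0. summable (\<lambda>p. (c p)\<^sup>2 * (1 + eps) ^ p))"

definition xi :: "(nat \<Rightarrow> real) \<Rightarrow> real \<Rightarrow> real" where
  "xi c t = (\<Sum>p. (c p)\<^sup>2 * t ^ p)"

text \<open>Pr([0,1]): Borel probability measures on the real line concentrated on [0,1].\<close>

definition Pr01 :: "real measure \<Rightarrow> bool" where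
  "Pr01 M \<longleftrightarrow> prob_space M \<and> sets M = sets borel \<and> emeasure M {0..1} = 1"

definition cdf01 :: "real measure \<Rightarrow> real \<Rightarrow> real" where
  "cdf01 M s = measure M {0..s}"

definition muhat :: "real measure \<Rightarrow> real \<Rightarrow> real" where
  "muhat M t = integral {t..1} (\<lambda>s. cdf01 M s)"

definition supp :: "real measure \<Rightarrow> real set" where
  "supp M = {x. \<forall>e>0. emeasure M (ball x e) > 0}"

definition qstar :: "real measure \<Rightarrow> real" where
  "qstar M = Sup (supp M)"

text \<open>The functional P_{beta,h,xi}. The integrand 1/muhat(s) - 1/(1-s) is nonnegative
  (as muhat(s) <= 1-s); it is integrated as a nonnegative (possibly infinite) integral,
  with 1/0 = +infinity.\<close>

definition Pfun :: "real \<Rightarrow> real \<Rightarrow> (nat \<Rightarrow> real) \<Rightarrow> real measure \<Rightarrow> ereal" where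
  "Pfun \<beta> h c M = ereal (1/2) *
     (ereal (integral {0..1} (\<lambda>s. \<beta>\<^sup>2 * deriv (deriv (xi c)) s * muhat M s))
      + enn2ereal (\<integral>\<^sup>+ s\<in>{0..<1}.
            (if muhat M s = 0 then \<infinity> else ennreal (1 / muhat M s - 1 / (1 - s))) \<partial>lborel)
      + ereal (h\<^sup>2 * muhat M 0))"

definition Ptilde :: "real \<Rightarrow> real \<Rightarrow> (nat \<Rightarrow> real) \<Rightarrow> real measure \<Rightarrow> ereal" where
  "Ptilde \<beta> h c M =
     (if qstar M < 1 then
        ereal ((1/2) * (integral {0..1} (\<lambda>s. \<beta>\<^sup>2 * deriv (xi c) s * cdf01 M s)
                 + h\<^sup>2 * muhat M 0
                 + integral {0..qstar M} (\<lambda>s. 1 / muhat M s)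
                 + ln (1 - qstar M)))
      else \<infinity>)"

definition weak_star_conv :: "(nat \<Rightarrow> real measure) \<Rightarrow> real measure \<Rightarrow> bool" where
  "weak_star_conv Ms M \<longleftrightarrow>
     (\<forall>f::real \<Rightarrow> real. continuous_on {0..1} f \<longrightarrow>
        (\<lambda>n. (LINT x:{0..1}|Ms n. f x)) \<longlonglongrightarrow> (LINT x:{0..1}|M. f x))"

text \<open>This topology is
  metrizable (Pr([0,1]) is a compact metrizable space), so lower semicontinuity is
  equivalent to its sequential version.\<close>

definition weak_star_lsc :: "(real measure \<Rightarrow> ereal) \<Rightarrow> bool" where
  "weak_star_lsc F \<longleftrightarrow>
     (\<forall>Ms M. Pr01 M \<longrightarrow> (\<forall>n. Pr01 (Ms n)) \<longrightarrow> weak_star_conv Ms M \<longrightarrow>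
        F M \<le> liminf (\<lambda>n. F (Ms n)))"

end

theory Submission
  imports Defs
begin

text \<open>Since \<open>muhat \<mu> t\<close> is the integral of the continuous function \<open>x \<mapsto> 1 - max x t\<close>
  against \<open>\<mu>\<close> (Tonelli), weak-* convergence gives pointwise convergence of \<open>muhat\<close> on \<open>[0,1]\<close>.
  The first and last terms of \<open>Pfun\<close> then converge by dominated convergence, and the middle
  term is lower semicontinuous by Fatou's lemma, its integrand being a lower semicontinuous
  function of \<open>muhat \<mu> s\<close>.

  The uniform distribution on \<open>[0,1]\<close> has \<open>q\<^sub>* = 1\<close>, so \<open>Ptilde\<close> is infinite there, yet it
  is the weak-* limit of the laws of \<open>min U a\<close> as \<open>a \<rightarrow> 1\<close>. For these,
  \<open>muhat s = (a\<^sup>2 - s\<^sup>2) / 2 + 1 - a \<ge> (1 - s\<^sup>2) / 2\<close> on \<open>[0,a]\<close>, so the integral of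
  \<open>1 / muhat\<close> up to \<open>q\<^sub>* = a\<close> is at most \<open>ln ((1 + a) / (1 - a))\<close>, whose divergence is
  cancelled by the term \<open>ln (1 - a)\<close>: \<open>Ptilde\<close> stays bounded along the sequence.\<close>

lemma summable_diffs_powser:
  fixes a :: "nat \<Rightarrow> 'a::{real_normed_field,banach}"
  assumes "\<And>z. norm z < R \<Longrightarrow> summable (\<lambda>n. a n * z ^ n)" "norm z < R"
  shows "summable (\<lambda>n. diffs a n * z ^ n)"
  by (rule termdiff_converges[OF assms(2)]) (use assms(1) in auto)

lemma deriv_powser:
  fixes a :: "nat \<Rightarrow> 'a::{real_normed_field,banach}"
  assumes "\<And>z. norm z < R \<Longrightarrow> summable (\<lambda>n. a n * z ^ n)" "norm z < R"
  shows "deriv (\<lambda>z. \<Sum>n. a n * z ^ n) z = (\<Sum>n. diffs a n * z ^ n)"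
  by (rule DERIV_imp_deriv[OF termdiffs_strong'[OF assms]])

lemma deriv_deriv_powser:
  fixes a :: "nat \<Rightarrow> 'a::{real_normed_field,banach}"
  assumes summable: "\<And>z. norm z < R \<Longrightarrow> summable (\<lambda>n. a n * z ^ n)" and "norm z < R"
  shows "deriv (deriv (\<lambda>z. \<Sum>n. a n * z ^ n)) z = (\<Sum>n. diffs (diffs a) n * z ^ n)"
proof -
  have "eventually (\<lambda>w. w \<in> ball 0 R) (nhds z)"
    using assms(2) by (intro eventually_nhds_in_open) auto
  then have "eventually (\<lambda>w. deriv (\<lambda>z. \<Sum>n. a n * z ^ n) w = (\<Sum>n. diffs a n * w ^ n)) (nhds z)"
    by eventually_elim (use deriv_powser[OF summable] in auto)
  then have "deriv (deriv (\<lambda>z. \<Sum>n. a n * z ^ n)) z = deriv (\<lambda>w. \<Sum>n. diffs a n * w ^ n) z"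
    by (rule deriv_cong_ev) simp
  also have "\<dots> = (\<Sum>n. diffs (diffs a) n * z ^ n)"
    by (rule deriv_powser[OF summable_diffs_powser[OF summable] assms(2)])
  finally show ?thesis .
qed

lemma continuous_on_powser_ball:
  fixes a :: "nat \<Rightarrow> 'a::{real_normed_field,banach}"
  assumes "\<And>z. norm z < R \<Longrightarrow> summable (\<lambda>n. a n * z ^ n)"
  shows "continuous_on (ball 0 R) (\<lambda>z. \<Sum>n. a n * z ^ n)"
  by (rule continuous_at_imp_continuous_on)
     (use termdiffs_strong'[OF assms] in \<open>force intro: DERIV_isCont\<close>)

lemma is_model_summable_beyond_1:
  assumes "is_model c"
  obtains R :: real where "R > 1" "\<And>z. norm z < R \<Longrightarrow> summable (\<lambda>n. (c n)\<^sup>2 * z ^ n)"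
proof -
  from assms obtain eps where "eps > 0" and summable: "summable (\<lambda>p. (c p)\<^sup>2 * (1 + eps) ^ p)"
    unfolding is_model_def by blast
  show thesis
  proof (rule that[of "1 + eps"])
    show "1 < 1 + eps" using \<open>eps > 0\<close> by simp
    show "summable (\<lambda>n. (c n)\<^sup>2 * z ^ n)" if "norm z < 1 + eps" for z :: real
      by (rule powser_inside[OF summable]) (use that \<open>eps > 0\<close> in simp)
  qed
qed

lemma continuous_on_xi_derivs:
  assumes "is_model c"
  shows "continuous_on {0..1} (deriv (xi c))" "continuous_on {0..1} (deriv (deriv (xi c)))"
proof -
  obtain R where "R > 1" and summable: "\<And>z. norm z < R \<Longrightarrow> summable (\<lambda>n. (c n)\<^sup>2 * z ^ n)"
    using is_model_summable_beyond_1[OF assms] by blast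
  have xi_eq: "xi c = (\<lambda>z. \<Sum>n. (c n)\<^sup>2 * z ^ n)"
    by (simp add: xi_def fun_eq_iff)
  have unit_interval: "{0..1} \<subseteq> ball (0::real) R"
    using \<open>R > 1\<close> by auto
  have "continuous_on (ball 0 R) (deriv (xi c))"
  proof (rule continuous_on_eq[OF continuous_on_powser_ball[OF summable_diffs_powser[OF summable]]])
    show "(\<Sum>n. diffs (\<lambda>n. (c n)\<^sup>2) n * z ^ n) = deriv (xi c) z" if "z \<in> ball 0 R" for z
      using deriv_powser[OF summable, where z=z] that by (simp add: xi_eq)
  qed
  then show "continuous_on {0..1} (deriv (xi c))"
    using unit_interval by (rule continuous_on_subset)
  have "continuous_on (ball 0 R) (deriv (deriv (xi c)))"
  proof (rule continuous_on_eq[OF continuous_on_powser_ball[OF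
        summable_diffs_powser[OF summable_diffs_powser[OF summable]]]])
    show "(\<Sum>n. diffs (diffs (\<lambda>n. (c n)\<^sup>2)) n * z ^ n) = deriv (deriv (xi c)) z"
      if "z \<in> ball 0 R" for z
      using deriv_deriv_powser[OF summable, where z=z] that by (simp add: xi_eq)
  qed
  then show "continuous_on {0..1} (deriv (deriv (xi c)))"
    using unit_interval by (rule continuous_on_subset)
qed

lemma nn_integral_emeasure_Icc_eq:
  fixes M :: "real measure"
  assumes "sigma_finite_measure M" "sets M = sets borel" "t \<le> 1"
  shows "(\<integral>\<^sup>+ s. indicator {t..1} s * emeasure M {0..s} \<partial>lborel)
       = (\<integral>\<^sup>+ x. indicator {0..1} x * ennreal (1 - max x t) \<partial>M)"
proof -
  interpret sigma_finite_measure M by (rule assms(1))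
  interpret pair_sigma_finite M lborel ..
  have sets_M[measurable_cong]: "sets M = sets borel" by (rule assms(2))
  define S where "S = {p :: real \<times> real. 0 \<le> fst p \<and> fst p \<le> snd p \<and> t \<le> snd p \<and> snd p \<le> 1}"
  have "{p \<in> space (M \<Otimes>\<^sub>M lborel). 0 \<le> fst p \<and> fst p \<le> snd p \<and> t \<le> snd p \<and> snd p \<le> 1}
        \<in> sets (M \<Otimes>\<^sub>M lborel)"
    by measurable
  then have S_sets: "S \<in> sets (M \<Otimes>\<^sub>M lborel)"
    using sets_eq_imp_space_eq[OF sets_M] by (simp add: S_def space_pair_measure)
  have section_M: "indicator {t..1} s * emeasure M {0..s} = (\<integral>\<^sup>+ x. indicator S (x, s) \<partial>M)" for s
  proof -
    have "(\<integral>\<^sup>+ x. indicator S (x, s) \<partial>M)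
        = (\<integral>\<^sup>+ x. indicator {t..1} s * indicator {0..s} x \<partial>M)"
      by (rule nn_integral_cong) (auto simp: S_def indicator_def)
    then show ?thesis by (simp add: nn_integral_cmult)
  qed
  have section_lborel:
    "(\<integral>\<^sup>+ s. indicator S (x, s) \<partial>lborel) = indicator {0..1} x * ennreal (1 - max x t)" for x
  proof -
    have "(\<integral>\<^sup>+ s. indicator S (x, s) \<partial>lborel)
        = (\<integral>\<^sup>+ s. indicator {0..1} x * indicator {max x t..1} s \<partial>lborel)"
      by (rule nn_integral_cong) (auto simp: S_def indicator_def)
    then show ?thesis using assms(3) by (cases "x \<in> {0..1}") (simp_all add: nn_integral_cmult)
  qed
  have "(\<integral>\<^sup>+ s. indicator {t..1} s * emeasure M {0..s} \<partial>lborel)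
      = (\<integral>\<^sup>+ s. (\<integral>\<^sup>+ x. indicator S (x, s) \<partial>M) \<partial>lborel)"
    by (simp only: section_M)
  also have "\<dots> = (\<integral>\<^sup>+ x. (\<integral>\<^sup>+ s. indicator S (x, s) \<partial>lborel) \<partial>M)"
    by (rule Fubini) (use S_sets in measurable)
  also have "\<dots> = (\<integral>\<^sup>+ x. indicator {0..1} x * ennreal (1 - max x t) \<partial>M)"
    by (simp only: section_lborel)
  finally show ?thesis .
qed

lemma mono_cdf01:
  assumes "Pr01 M"
  shows "mono (cdf01 M)"
proof -
  interpret prob_space M using assms unfolding Pr01_def by blast
  have "sets M = sets borel" using assms unfolding Pr01_def by blast
  then show ?thesis unfolding mono_def cdf01_def
    by (intro allI impI finite_measure_mono) auto
qed

lemma cdf01_has_integral: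
  assumes "Pr01 M" "t \<le> 1"
  shows "(cdf01 M has_integral (LINT x:{0..1}|M. 1 - max x t)) {t..1}"
proof -
  interpret prob_space M using assms unfolding Pr01_def by blast
  have sets_M[measurable_cong]: "sets M = sets borel" using assms unfolding Pr01_def by blast
  define f where "f = (\<lambda>x::real. indicator {0..1} x * (1 - max x t))"
  have f_nonneg: "0 \<le> f x" for x using assms(2) by (simp add: f_def indicator_def)
  have [measurable]: "f \<in> borel_measurable borel" unfolding f_def by measurable
  have "integrable M f"
    by (rule integrable_const_bound[where B=1]) (use assms(2) in \<open>auto simp: f_def indicator_def\<close>)
  have [measurable]: "cdf01 M \<in> borel_measurable borel"
    by (rule borel_measurable_mono[OF mono_cdf01[OF assms(1)]])
  have "(\<integral>\<^sup>+ s. ennreal (indicator {t..1} s * cdf01 M s) \<partial>lborel)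
      = (\<integral>\<^sup>+ s. indicator {t..1} s * emeasure M {0..s} \<partial>lborel)"
    by (rule nn_integral_cong) (simp add: cdf01_def emeasure_eq_measure indicator_def)
  also have "\<dots> = (\<integral>\<^sup>+ x. indicator {0..1} x * ennreal (1 - max x t) \<partial>M)"
    by (rule nn_integral_emeasure_Icc_eq[OF _ sets_M assms(2)]) unfold_locales
  also have "\<dots> = (\<integral>\<^sup>+ x. ennreal (f x) \<partial>M)"
    by (rule nn_integral_cong) (simp add: f_def indicator_def)
  also have "\<dots> = ennreal (integral\<^sup>L M f)"
    by (rule nn_integral_eq_integral[OF \<open>integrable M f\<close>]) (simp add: f_nonneg)
  finally have "((\<lambda>s. indicator {t..1} s * cdf01 M s) has_integral integral\<^sup>L M f) UNIV"
    by (intro nn_integral_has_integral)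
       (measurable, auto simp: cdf01_def f_nonneg intro!: integral_nonneg_AE)
  then have "(cdf01 M has_integral integral\<^sup>L M f) {t..1}"
    by (simp only: indicator_times_eq_if(1) has_integral_restrict_UNIV)
  then show ?thesis by (simp add: f_def set_lebesgue_integral_def)
qed

lemma cdf01_bounds:
  assumes "Pr01 M"
  shows "0 \<le> cdf01 M s" "cdf01 M s \<le> 1"
proof -
  interpret prob_space M using assms unfolding Pr01_def by blast
  show "0 \<le> cdf01 M s" "cdf01 M s \<le> 1" by (simp_all add: cdf01_def)
qed

lemma muhat_eq_set_integral:
  assumes "Pr01 M" "t \<le> 1"
  shows "muhat M t = (LINT x:{0..1}|M. 1 - max x t)"
  unfolding muhat_def using cdf01_has_integral[OF assms] by (rule integral_unique)

lemma muhat_bounds: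
  assumes "Pr01 M" "t \<le> 1"
  shows "0 \<le> muhat M t" "muhat M t \<le> 1 - t"
proof -
  have cdf_integral: "(cdf01 M has_integral muhat M t) {t..1}"
    using cdf01_has_integral[OF assms] muhat_eq_set_integral[OF assms] by simp
  show "0 \<le> muhat M t"
    by (rule has_integral_nonneg[OF cdf_integral]) (simp add: cdf01_bounds[OF assms(1)])
  have "((\<lambda>_. 1) has_integral 1 - t) {t..1}"
    using has_integral_const_real[of "1::real" t 1] assms(2) by simp
  then show "muhat M t \<le> 1 - t"
    by (rule has_integral_le[OF cdf_integral]) (simp add: cdf01_bounds[OF assms(1)])
qed

lemma continuous_on_muhat:
  assumes "Pr01 M"
  shows "continuous_on {0..1} (muhat M)"
proof -
  have "cdf01 M integrable_on {0..1}"
    using cdf01_has_integral[OF assms, of 0] by auto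
  then show ?thesis unfolding muhat_def[abs_def]
    by (rule indefinite_integral_continuous_1')
qed

lemma muhat_tendsto:
  assumes "Pr01 M" "\<And>n. Pr01 (Ms n)" "weak_star_conv Ms M" "t \<le> 1"
  shows "(\<lambda>n. muhat (Ms n) t) \<longlonglongrightarrow> muhat M t"
proof -
  have "continuous_on {0..1} (\<lambda>x::real. 1 - max x t)" by (intro continuous_intros)
  then have "(\<lambda>n. LINT x:{0..1}|Ms n. 1 - max x t) \<longlonglongrightarrow> (LINT x:{0..1}|M. 1 - max x t)"
    using assms(3) unfolding weak_star_conv_def by blast
  then show ?thesis
    using muhat_eq_set_integral[OF assms(1,4)] muhat_eq_set_integral[OF assms(2,4)] by simp
qed

lemma integral_muhat_tendsto:
  assumes "Pr01 M" "\<And>n. Pr01 (Ms n)" "weak_star_conv Ms M" "continuous_on {0..1} D"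
  shows "(\<lambda>n. integral {0..1} (\<lambda>s. D s * muhat (Ms n) s))
         \<longlonglongrightarrow> integral {0..1} (\<lambda>s. D s * muhat M s)"
proof -
  obtain B where B: "\<And>s. s \<in> {0..1} \<Longrightarrow> norm (D s) \<le> B"
    using continuous_on_compact_bound[OF compact_Icc assms(4)] by blast
  show ?thesis
  proof (rule dominated_convergence(2)[where h="\<lambda>_. B"])
    show "(\<lambda>s. D s * muhat (Ms n) s) integrable_on {0..1}" for n
      by (intro integrable_continuous_interval continuous_intros assms(4) continuous_on_muhat assms(2))
    show "(\<lambda>_. B) integrable_on {0..1::real}" by (intro integrable_continuous_interval continuous_intros)
    show "norm (D s * muhat (Ms n) s) \<le> B" if "s \<in> {0..1}" for n s
    proof -
      have "\<bar>muhat (Ms n) s\<bar> \<le> 1" using muhat_bounds[OF assms(2), of s n] that by auto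
      then have "\<bar>D s\<bar> * \<bar>muhat (Ms n) s\<bar> \<le> \<bar>D s\<bar>" by (simp add: mult_left_le)
      then show ?thesis using B[OF that] by (simp add: abs_mult)
    qed
    show "(\<lambda>n. D s * muhat (Ms n) s) \<longlonglongrightarrow> D s * muhat M s" if "s \<in> {0..1}" for s
      using that by (intro tendsto_intros muhat_tendsto[OF assms(1-3)]) simp
  qed
qed

lemma liminf_ennreal_reciprocal_ge:
  fixes x :: "nat \<Rightarrow> real"
  assumes lim: "x \<longlonglongrightarrow> x0" and nonneg: "\<And>n. 0 \<le> x n"
  shows "(if x0 = 0 then \<infinity> else ennreal (1 / x0 - b))
     \<le> liminf (\<lambda>n. if x n = 0 then \<infinity> else ennreal (1 / x n - b))"
proof (cases "x0 = 0")
  case False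
  have "0 \<le> x0" by (rule tendsto_lowerbound[OF lim]) (simp_all add: nonneg)
  with False have "x0 > 0" by simp
  have "eventually (\<lambda>n. ennreal (1 / x n - b) = (if x n = 0 then \<infinity> else ennreal (1 / x n - b)))
          sequentially"
    using order_tendstoD(1)[OF lim \<open>x0 > 0\<close>] by eventually_elim simp
  moreover have "(\<lambda>n. ennreal (1 / x n - b)) \<longlonglongrightarrow> ennreal (1 / x0 - b)"
    by (intro tendsto_ennrealI tendsto_intros lim) (use False in auto)
  ultimately have "(\<lambda>n. if x n = 0 then \<infinity> else ennreal (1 / x n - b)) \<longlonglongrightarrow> ennreal (1 / x0 - b)"
    by (rule Lim_transform_eventually[rotated])
  then show ?thesis using False by (simp add: lim_imp_Liminf)
next
  case True
  show ?thesis unfolding True le_Liminf_iff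
  proof (intro allI impI)
    fix y :: ennreal assume "y < (if (0::real) = 0 then \<infinity> else ennreal (1 / 0 - b))"
    then obtain r where r: "y = ennreal r" "0 \<le> r" by (cases y) auto
    define K where "K = r + \<bar>b\<bar> + 1"
    have "K > 0" using r unfolding K_def by simp
    then have "eventually (\<lambda>n. x n < 1 / K) sequentially"
      using lim True order_tendstoD(2) by fastforce
    then show "eventually (\<lambda>n. y < (if x n = 0 then \<infinity> else ennreal (1 / x n - b))) sequentially"
    proof (rule eventually_mono)
      fix n assume small: "x n < 1 / K"
      show "y < (if x n = 0 then \<infinity> else ennreal (1 / x n - b))"
      proof (cases "x n = 0")
        case False
        then have "K < 1 / x n" using small nonneg[of n] \<open>K > 0\<close> by (simp add: field_simps)
        then have "r < 1 / x n - b" unfolding K_def by linarith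
        then show ?thesis using False r by (simp add: ennreal_less_iff)
      qed (use r in simp)
    qed
  qed
qed

definition Pfun_integrand :: "real measure \<Rightarrow> real \<Rightarrow> ennreal" where
  "Pfun_integrand M s = (if muhat M s = 0 then \<infinity> else ennreal (1 / muhat M s - 1 / (1 - s)))"

lemma Pfun_integrand_le_liminf:
  assumes "Pr01 M" "\<And>n. Pr01 (Ms n)" "weak_star_conv Ms M" "s \<le> 1"
  shows "Pfun_integrand M s \<le> liminf (\<lambda>n. Pfun_integrand (Ms n) s)"
  unfolding Pfun_integrand_def
  by (rule liminf_ennreal_reciprocal_ge[OF muhat_tendsto[OF assms]])
     (rule muhat_bounds[OF assms(2,4)])

lemma borel_measurable_Pfun_integrand:
  assumes "Pr01 M"
  shows "(\<lambda>s. Pfun_integrand M s * indicator {0..<1} s) \<in> borel_measurable borel"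
proof -
  define m where "m s = muhat M (max 0 (min s 1))" for s
  have "continuous_on UNIV m" unfolding m_def
    by (rule continuous_on_compose2[OF continuous_on_muhat[OF assms]]) (intro continuous_intros, auto)
  then have [measurable]: "m \<in> borel_measurable borel" by (rule borel_measurable_continuous_onI)
  have "(\<lambda>s. Pfun_integrand M s * indicator {0..<1} s)
      = (\<lambda>s. (if m s = 0 then \<infinity> else ennreal (1 / m s - 1 / (1 - s))) * indicator {0..<1} s)"
    by (auto simp: Pfun_integrand_def m_def fun_eq_iff indicator_def)
  also have "\<dots> \<in> borel_measurable borel" by measurable
  finally show ?thesis .
qed

lemma nn_integral_Pfun_integrand_le_liminf:
  assumes "Pr01 M" "\<And>n. Pr01 (Ms n)" "weak_star_conv Ms M"
  shows "(\<integral>\<^sup>+ s\<in>{0..<1}. Pfun_integrand M s \<partial>lborel)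
       \<le> liminf (\<lambda>n. \<integral>\<^sup>+ s\<in>{0..<1}. Pfun_integrand (Ms n) s \<partial>lborel)"
proof -
  have "(\<integral>\<^sup>+ s\<in>{0..<1}. Pfun_integrand M s \<partial>lborel)
      \<le> (\<integral>\<^sup>+ s. liminf (\<lambda>n. Pfun_integrand (Ms n) s * indicator {0..<1} s) \<partial>lborel)"
    by (intro nn_integral_mono)
       (auto simp: indicator_def intro: Pfun_integrand_le_liminf[OF assms])
  also have "\<dots> \<le> liminf (\<lambda>n. \<integral>\<^sup>+ s\<in>{0..<1}. Pfun_integrand (Ms n) s \<partial>lborel)"
    by (rule nn_integral_liminf) (simp add: borel_measurable_Pfun_integrand assms(2))
  finally show ?thesis .
qed

lemma le_liminf_scaled_sum:
  fixes A C :: "nat \<Rightarrow> real" and B :: "nat \<Rightarrow> ennreal"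
  assumes "A \<longlonglongrightarrow> A0" "B0 \<le> liminf B" "C \<longlonglongrightarrow> C0" "k \<ge> 0"
  shows "ereal k * (ereal A0 + enn2ereal B0 + ereal C0)
       \<le> liminf (\<lambda>n. ereal k * (ereal (A n) + enn2ereal (B n) + ereal (C n)))"
proof -
  have "(\<lambda>n. ereal (A n + C n)) \<longlonglongrightarrow> ereal (A0 + C0)"
    using assms(1,3) by (intro tendsto_intros)
  then have "liminf (\<lambda>n. ereal (A n + C n) + enn2ereal (B n))
           = ereal (A0 + C0) + liminf (\<lambda>n. enn2ereal (B n))"
    by (rule ereal_liminf_lim_add) simp
  also have "liminf (\<lambda>n. enn2ereal (B n)) = enn2ereal (liminf B)"
    by (rule Liminf_compose_continuous_mono[OF continuous_on_enn2ereal])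
       (auto simp: mono_def less_eq_ennreal.rep_eq)
  finally have "ereal (A0 + C0) + enn2ereal B0 \<le> liminf (\<lambda>n. ereal (A n + C n) + enn2ereal (B n))"
    using assms(2) by (simp add: less_eq_ennreal.rep_eq add_left_mono)
  then have "ereal k * (ereal (A0 + C0) + enn2ereal B0)
           \<le> ereal k * liminf (\<lambda>n. ereal (A n + C n) + enn2ereal (B n))"
    by (rule ereal_mult_left_mono) (simp add: assms(4))
  also have "\<dots> = liminf (\<lambda>n. ereal k * (ereal (A n + C n) + enn2ereal (B n)))"
    by (rule Liminf_ereal_mult_left[symmetric]) (simp_all add: assms(4))
  finally show ?thesis by (simp add: ac_simps)
qed

lemma weak_star_lsc_Pfun:
  assumes "is_model c"
  shows "weak_star_lsc (Pfun \<beta> h c)"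
  unfolding weak_star_lsc_def
proof (intro allI impI)
  fix Ms M assume M: "Pr01 M" "\<forall>n. Pr01 (Ms n)" "weak_star_conv Ms M"
  then have Ms: "\<And>n. Pr01 (Ms n)" by blast
  have "(\<lambda>n. integral {0..1} (\<lambda>s. \<beta>\<^sup>2 * deriv (deriv (xi c)) s * muhat (Ms n) s))
        \<longlonglongrightarrow> integral {0..1} (\<lambda>s. \<beta>\<^sup>2 * deriv (deriv (xi c)) s * muhat M s)"
    by (intro integral_muhat_tendsto M(1,3) Ms continuous_intros continuous_on_xi_derivs assms)
  moreover have "(\<lambda>n. h\<^sup>2 * muhat (Ms n) 0) \<longlonglongrightarrow> h\<^sup>2 * muhat M 0"
    by (intro tendsto_intros muhat_tendsto M(1,3) Ms) simp
  ultimately show "Pfun \<beta> h c M \<le> liminf (\<lambda>n. Pfun \<beta> h c (Ms n))"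
    unfolding Pfun_def Pfun_integrand_def[symmetric]
    by (intro le_liminf_scaled_sum nn_integral_Pfun_integrand_le_liminf M(1,3) Ms) simp_all
qed

lemma qstar_eqI:
  assumes "sets M = sets borel" "\<And>e. e > 0 \<Longrightarrow> emeasure M (ball b e) > 0" "emeasure M {b<..} = 0"
  shows "qstar M = b"
  unfolding qstar_def
proof (rule cSup_eq_maximum)
  show "b \<in> supp M" using assms(2) by (simp add: supp_def)
  show "x \<le> b" if "x \<in> supp M" for x
  proof (rule ccontr)
    assume "\<not> x \<le> b"
    then have "ball x (x - b) \<subseteq> {b<..}" by (auto simp: dist_real_def)
    then have "emeasure M (ball x (x - b)) = 0"
      using emeasure_mono[of "ball x (x - b)" "{b<..}" M] assms(1,3) by simp
    moreover have "emeasure M (ball x (x - b)) > 0"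
      using that \<open>\<not> x \<le> b\<close> by (simp add: supp_def)
    ultimately show False by simp
  qed
qed

definition uniform01 :: "real measure" where
  "uniform01 = density lborel (indicator {0..1})"

lemma sets_uniform01 [measurable_cong, simp]: "sets uniform01 = sets borel"
  by (simp add: uniform01_def)

lemma space_uniform01 [simp]: "space uniform01 = UNIV"
  by (simp add: uniform01_def)

lemma emeasure_uniform01: "A \<in> sets borel \<Longrightarrow> emeasure uniform01 A = emeasure lborel (A \<inter> {0..1})"
  unfolding uniform01_def
  by (subst emeasure_density) (auto simp: indicator_inter_arith[symmetric] mult.commute)

lemma prob_space_uniform01: "prob_space uniform01"
  by (rule prob_spaceI) (simp add: emeasure_uniform01)

lemma Pr01_uniform01: "Pr01 uniform01"
  unfolding Pr01_def by (simp add: prob_space_uniform01 emeasure_uniform01)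

lemma qstar_uniform01: "qstar uniform01 = 1"
proof (rule qstar_eqI)
  show "emeasure uniform01 (ball 1 e) > 0" if "e > 0" for e :: real
  proof -
    have "{max 0 (1 - e / 2)..1} \<subseteq> ball 1 e \<inter> {0..1}" using that by (auto simp: dist_real_def)
    then have "emeasure lborel {max 0 (1 - e / 2)..1} \<le> emeasure lborel (ball (1::real) e \<inter> {0..1})"
      by (intro emeasure_mono) auto
    moreover have "emeasure lborel {max 0 (1 - e / 2)..1} > 0" using that by simp
    ultimately show ?thesis by (simp add: emeasure_uniform01)
  qed
  have "{1<..} \<inter> {0..1} = ({} :: real set)" by auto
  then show "emeasure uniform01 {1<..} = 0" by (simp add: emeasure_uniform01)
qed simp

text \<open>Lebesgue measure on \<open>[0,a)\<close> plus an atom of mass \<open>1 - a\<close> at \<open>a\<close>.\<close>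

definition capped_uniform :: "real \<Rightarrow> real measure" where
  "capped_uniform a = distr uniform01 borel (\<lambda>x. min x a)"

lemma sets_capped_uniform [measurable_cong, simp]: "sets (capped_uniform a) = sets borel"
  by (simp add: capped_uniform_def)

lemma emeasure_capped_uniform:
  "A \<in> sets borel \<Longrightarrow> emeasure (capped_uniform a) A = emeasure uniform01 ((\<lambda>x. min x a) -` A)"
  unfolding capped_uniform_def by (subst emeasure_distr) auto

lemma Pr01_capped_uniform:
  assumes "0 \<le> a" "a \<le> 1"
  shows "Pr01 (capped_uniform a)"
proof -
  have "prob_space (capped_uniform a)"
    unfolding capped_uniform_def by (rule prob_space.prob_space_distr[OF prob_space_uniform01]) auto
  moreover have "(\<lambda>x. min x a) -` {0..1} = {0..}" using assms by auto
  then have "emeasure (capped_uniform a) {0..1} = 1"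
    by (simp add: emeasure_capped_uniform emeasure_uniform01)
  ultimately show ?thesis unfolding Pr01_def by simp
qed

lemma qstar_capped_uniform:
  assumes "0 \<le> a" "a < 1"
  shows "qstar (capped_uniform a) = a"
proof (rule qstar_eqI)
  have "(\<lambda>x. min x a) -` {a} = {a..}" by auto
  then have "emeasure (capped_uniform a) {a} = ennreal (1 - a)"
    using assms by (simp add: emeasure_capped_uniform emeasure_uniform01 Int_commute)
  then have "emeasure (capped_uniform a) {a} > 0" using assms by simp
  then show "emeasure (capped_uniform a) (ball a e) > 0" if "e > 0" for e
    using emeasure_mono[of "{a}" "ball a e" "capped_uniform a"] that
    by (simp add: order_less_le_trans)
  have "(\<lambda>x. min x a) -` {a<..} = {}" by auto
  then show "emeasure (capped_uniform a) {a<..} = 0" by (simp add: emeasure_capped_uniform)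
qed simp

lemma cdf01_capped_uniform:
  assumes "0 \<le> a" "a \<le> 1" "0 \<le> s"
  shows "cdf01 (capped_uniform a) s = (if s < a then s else 1)"
proof -
  have "(\<lambda>x. min x a) -` {0..s} = (if s < a then {0..s} else {0..})" using assms by auto
  moreover have "{0..s} \<inter> {0..1} = {0..s}" if "s < a" using that assms by auto
  ultimately show ?thesis
    using assms by (simp add: cdf01_def measure_def emeasure_capped_uniform emeasure_uniform01)
qed

lemma muhat_capped_uniform:
  assumes "0 \<le> s" "s \<le> a" "a \<le> 1"
  shows "muhat (capped_uniform a) s = (a\<^sup>2 - s\<^sup>2) / 2 + (1 - a)"
proof -
  have "((\<lambda>u. u) has_integral (a\<^sup>2 / 2 - s\<^sup>2 / 2)) {s..a}"
    by (rule fundamental_theorem_of_calculus[OF assms(2)])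
       (auto intro!: derivative_eq_intros simp: has_real_derivative_iff_has_vector_derivative[symmetric])
  then have lower: "(cdf01 (capped_uniform a) has_integral (a\<^sup>2 / 2 - s\<^sup>2 / 2)) {s..a}"
    by (rule has_integral_spike_finite[where S="{a}", rotated 2])
       (use assms in \<open>auto simp: cdf01_capped_uniform\<close>)
  have "((\<lambda>u. 1) has_integral (1 - a)) {a..1}"
    using has_integral_const_real[of "1::real" a 1] assms by simp
  then have upper: "(cdf01 (capped_uniform a) has_integral (1 - a)) {a..1}"
    by (rule has_integral_eq[rotated]) (use assms in \<open>simp add: cdf01_capped_uniform\<close>)
  have "(cdf01 (capped_uniform a) has_integral ((a\<^sup>2 / 2 - s\<^sup>2 / 2) + (1 - a))) {s..1}"
    by (rule has_integral_combine[OF assms(2,3) lower upper])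
  then show ?thesis unfolding muhat_def by (simp add: integral_unique diff_divide_distrib)
qed

lemma weak_star_conv_capped_uniform:
  assumes lim: "a \<longlonglongrightarrow> 1" and range: "\<And>n. a n \<in> {0..1}"
  shows "weak_star_conv (\<lambda>n. capped_uniform (a n)) uniform01"
  unfolding weak_star_conv_def
proof (intro allI impI)
  fix f :: "real \<Rightarrow> real" assume f: "continuous_on {0..1} f"
  obtain B where B: "\<And>x. x \<in> {0..1} \<Longrightarrow> norm (f x) \<le> B"
    using continuous_on_compact_bound[OF compact_Icc f] by blast
  then have "0 \<le> B" using norm_ge_zero[of "f 0"] by fastforce
  define g where "g x = indicator {0..1} x * f x" for x
  have [measurable]: "g \<in> borel_measurable borel"
    using borel_measurable_continuous_on_indicator[OF _ f] by (simp add: g_def[abs_def])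
  interpret prob_space uniform01 by (rule prob_space_uniform01)
  have "(\<lambda>n. integral\<^sup>L uniform01 (\<lambda>x. g (min x (a n)))) \<longlonglongrightarrow> integral\<^sup>L uniform01 g"
  proof (rule integral_dominated_convergence[where w="\<lambda>_. B"])
    show "AE x in uniform01. norm (g (min x (a n))) \<le> B" for n
      by (rule AE_I2) (use B \<open>0 \<le> B\<close> in \<open>auto simp: g_def indicator_def\<close>)
    have "AE x in uniform01. x \<in> {0..1}"
      unfolding uniform01_def by (subst AE_density) (auto simp: indicator_def)
    then show "AE x in uniform01. (\<lambda>n. g (min x (a n))) \<longlonglongrightarrow> g x"
    proof (rule AE_mp[OF _ AE_I2], intro impI)
      fix x :: real assume x: "x \<in> {0..1}"
      have "(\<lambda>n. min x (a n)) \<longlonglongrightarrow> min x 1" by (intro tendsto_intros lim)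
      then have "(\<lambda>n. f (min x (a n))) \<longlonglongrightarrow> f x"
        by (intro continuous_on_tendsto_compose[OF f]) (use x range in \<open>auto simp: min_def\<close>)
      moreover have "g (min x (a n)) = f (min x (a n))" for n
        using x range[of n] by (simp add: g_def indicator_def min_le_iff_disj)
      ultimately show "(\<lambda>n. g (min x (a n))) \<longlonglongrightarrow> g x"
        using x by (simp add: g_def[of x])
    qed
  qed simp_all
  moreover have "(LINT x:{0..1}|capped_uniform (a n). f x) = integral\<^sup>L uniform01 (\<lambda>x. g (min x (a n)))"
    for n
    unfolding set_lebesgue_integral_def capped_uniform_def real_scaleR_def g_def[symmetric]
    by (rule integral_distr) auto
  ultimately show "(\<lambda>n. LINT x:{0..1}|capped_uniform (a n). f x)
                     \<longlonglongrightarrow> (LINT x:{0..1}|uniform01. f x)"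
    by (simp add: set_lebesgue_integral_def g_def[symmetric])
qed

lemma has_integral_partial_fractions:
  fixes a :: real
  assumes "0 \<le> a" "a < 1"
  shows "((\<lambda>s. 1 / (1 - s) + 1 / (1 + s)) has_integral (ln (1 + a) - ln (1 - a))) {0..a}"
proof -
  have "((\<lambda>s. 1 / (1 - s) + 1 / (1 + s)) has_integral
          (ln (1 + a) - ln (1 - a)) - (ln (1 + 0) - ln (1 - 0))) {0..a}"
  proof (rule fundamental_theorem_of_calculus[OF assms(1)])
    fix s :: real assume s: "s \<in> {0..a}"
    then have "s < 1" using assms by simp
    have "((\<lambda>s. ln (1 + s) - ln (1 - s)) has_real_derivative (1 / (1 + s) - (- 1) / (1 - s)))
            (at s within {0..a})"
      by (rule derivative_eq_intros refl | use s \<open>s < 1\<close> in simp)+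
    then show "((\<lambda>s. ln (1 + s) - ln (1 - s)) has_vector_derivative 1 / (1 - s) + 1 / (1 + s))
                 (at s within {0..a})"
      by (simp add: has_real_derivative_iff_has_vector_derivative[symmetric] algebra_simps)
  qed
  then show ?thesis by simp
qed

lemma integral_inverse_quadratic_le:
  fixes a :: real
  assumes "0 \<le> a" "a < 1"
  shows "integral {0..a} (\<lambda>s. 1 / ((a\<^sup>2 - s\<^sup>2) / 2 + (1 - a))) + ln (1 - a) \<le> ln 2"
proof -
  have denominators: "0 < (1 - s\<^sup>2) / 2" "(1 - s\<^sup>2) / 2 \<le> (a\<^sup>2 - s\<^sup>2) / 2 + (1 - a)"
    if "s \<in> {0..a}" for s
  proof -
    have "\<bar>s\<bar> < 1" using that assms by simp
    then have "s\<^sup>2 < 1" by (simp add: abs_square_less_1)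
    then show "0 < (1 - s\<^sup>2) / 2" by simp
    have "0 \<le> (1 - a)\<^sup>2 / 2" by simp
    then show "(1 - s\<^sup>2) / 2 \<le> (a\<^sup>2 - s\<^sup>2) / 2 + (1 - a)" by (simp add: power2_eq_square field_simps)
  qed
  have "(a\<^sup>2 - s\<^sup>2) / 2 + (1 - a) \<noteq> 0" if "s \<in> {0..a}" for s
    using denominators[OF that] by linarith
  then have "(\<lambda>s. 1 / ((a\<^sup>2 - s\<^sup>2) / 2 + (1 - a))) integrable_on {0..a}"
    by (intro integrable_continuous_interval continuous_intros ballI) auto
  moreover have "1 / ((a\<^sup>2 - s\<^sup>2) / 2 + (1 - a)) \<le> 1 / (1 - s) + 1 / (1 + s)" if "s \<in> {0..a}" for s
  proof -
    have "1 / (1 - s) + 1 / (1 + s) = 1 / ((1 - s\<^sup>2) / 2)"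
      using that assms by (simp add: field_simps power2_eq_square)
    then show ?thesis
      using le_imp_inverse_le[OF denominators(2,1)[OF that]] by (simp add: inverse_eq_divide)
  qed
  ultimately have "integral {0..a} (\<lambda>s. 1 / ((a\<^sup>2 - s\<^sup>2) / 2 + (1 - a))) \<le> ln (1 + a) - ln (1 - a)"
    using has_integral_partial_fractions[OF assms]
    by (intro has_integral_le[OF integrable_integral]) auto
  moreover have "ln (1 + a) \<le> ln 2" using assms by simp
  ultimately show ?thesis by simp
qed

lemma integral_times_cdf01_le:
  assumes "Pr01 M" and bound: "\<And>s. s \<in> {0..1} \<Longrightarrow> \<bar>f s\<bar> \<le> B"
  shows "integral {0..1} (\<lambda>s. f s * cdf01 M s) \<le> B"
proof -
  have "0 \<le> B" using bound[of 0] by simp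
  show ?thesis
  proof (cases "(\<lambda>s. f s * cdf01 M s) integrable_on {0..1}")
    case True
    have "f s * cdf01 M s \<le> B" if "s \<in> {0..1}" for s
    proof -
      have "\<bar>f s\<bar> * \<bar>cdf01 M s\<bar> \<le> \<bar>f s\<bar>"
        using cdf01_bounds[OF assms(1), of s] by (simp add: mult_left_le)
      then show ?thesis using bound[OF that] by (metis abs_ge_self abs_mult order_trans)
    qed
    then have "integral {0..1} (\<lambda>s. f s * cdf01 M s) \<le> integral {0..1::real} (\<lambda>_. B)"
      using True by (intro integral_le) auto
    then show ?thesis by simp
  qed (simp add: not_integrable_integral \<open>0 \<le> B\<close>)
qed

lemma Ptilde_capped_uniform_bounded:
  assumes "is_model c"
  obtains K where "\<And>a. a \<in> {0..<1} \<Longrightarrow> Ptilde \<beta> h c (capped_uniform a) \<le> ereal K"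
proof -
  obtain B where B: "\<And>s. s \<in> {0..1} \<Longrightarrow> norm (deriv (xi c) s) \<le> B"
    using continuous_on_compact_bound[OF compact_Icc continuous_on_xi_derivs(1)[OF assms]] by blast
  have "Ptilde \<beta> h c (capped_uniform a) \<le> ereal ((\<beta>\<^sup>2 * B + h\<^sup>2 + ln 2) / 2)" if "a \<in> {0..<1}" for a
  proof -
    have a: "0 \<le> a" "a < 1" using that by auto
    have Pr01: "Pr01 (capped_uniform a)" using a by (intro Pr01_capped_uniform) auto
    have "integral {0..1} (\<lambda>s. \<beta>\<^sup>2 * deriv (xi c) s * cdf01 (capped_uniform a) s) \<le> \<beta>\<^sup>2 * B"
      using B by (intro integral_times_cdf01_le[OF Pr01]) (simp add: abs_mult mult_left_mono)
    moreover have "h\<^sup>2 * muhat (capped_uniform a) 0 \<le> h\<^sup>2"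
      using muhat_bounds(2)[OF Pr01, of 0] by (simp add: mult_left_le)
    moreover have "integral {0..a} (\<lambda>s. 1 / muhat (capped_uniform a) s) + ln (1 - a) \<le> ln 2"
      using integral_inverse_quadratic_le[OF a]
      by (subst integral_cong[where g="\<lambda>s. 1 / ((a\<^sup>2 - s\<^sup>2) / 2 + (1 - a))"])
         (use a in \<open>auto simp: muhat_capped_uniform\<close>)
    ultimately show ?thesis
      using a by (simp add: Ptilde_def qstar_capped_uniform)
  qed
  then show thesis by (rule that)
qed

lemma not_weak_star_lscI:
  assumes "Pr01 M" "\<And>n. Pr01 (Ms n)" "weak_star_conv Ms M"
    and "F M = \<infinity>" "\<And>n. F (Ms n) \<le> ereal K"
  shows "\<not> weak_star_lsc F"
proof
  assume "weak_star_lsc F"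
  then have "F M \<le> liminf (\<lambda>n. F (Ms n))"
    using assms(1-3) unfolding weak_star_lsc_def by blast
  also have "\<dots> \<le> ereal K"
    by (rule Liminf_le) (auto intro: assms(5) always_eventually)
  finally show False using assms(4) by simp
qed

theorem corollary6p2:
  fixes \<beta> h :: real and c :: "nat \<Rightarrow> real"
  assumes "\<beta> > 0" and "h \<ge> 0" and "is_model c"
  shows "weak_star_lsc (Pfun \<beta> h c) \<and> \<not> weak_star_lsc (Ptilde \<beta> h c)"
proof
  \<comment> \<open>The signs of \<open>\<beta>\<close> and \<open>h\<close> are irrelevant: both enter only through their squares.\<close>
  show "weak_star_lsc (Pfun \<beta> h c)" by (rule weak_star_lsc_Pfun[OF assms(3)])
  obtain K where K: "\<And>a. a \<in> {0..<1} \<Longrightarrow> Ptilde \<beta> h c (capped_uniform a) \<le> ereal K"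
    using Ptilde_capped_uniform_bounded[OF assms(3)] by blast
  define a where "a n = 1 - 1 / real (Suc n)" for n
  have a_range: "0 \<le> a n" "a n < 1" for n by (simp_all add: a_def)
  have "a \<longlonglongrightarrow> 1"
    unfolding a_def using LIMSEQ_inverse_real_of_nat_add_minus[of 1] by (simp add: inverse_eq_divide)
  show "\<not> weak_star_lsc (Ptilde \<beta> h c)"
  proof (rule not_weak_star_lscI)
    show "weak_star_conv (\<lambda>n. capped_uniform (a n)) uniform01"
      using \<open>a \<longlonglongrightarrow> 1\<close> a_range by (intro weak_star_conv_capped_uniform) (simp_all add: less_imp_le)
    show "Pr01 (capped_uniform (a n))" for n
      using a_range[of n] by (intro Pr01_capped_uniform) simp_all
    show "Ptilde \<beta> h c (capped_uniform (a n)) \<le> ereal K" for n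
      using a_range[of n] by (intro K) simp
  qed (simp_all add: Pr01_uniform01 Ptilde_def qstar_uniform01)
qed

end
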